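(* Let $(\Omega,\mathcal{A})$ be a measurable space with a $\sigma$-finite measure $\mu$, $\pi$ a probability density with respect to $\mu$, and $q_1,\dots,q_D$ transition densities (for each $x$, $q_d(x,\cdot)$ is a probability density with respect to $\mu$). Write $\bar\pi=\pi\otimes\pi$ and $(X,X')\sim\bar\pi$. Assume (A1): for every $d$, $\bar\pi\{(x,x'):q_d(x,x')=0\}=0$; (A2): for every $d$, $\mathbb{E}_{\bar\pi}[|\log q_d(X,X')|]<\infty$. Let $(\alpha^t)_{t\ge1}$ be defined by $\alpha^1=(1/D,\dots,1/D)$ and $\alpha^{t+1}=F(\alpha^t)$, where $F(\alpha)=\big(\mathbb{E}_{\bar\pi}[\alpha_dq_d(X,X')/\sum_{j=1}^D\alpha_jq_j(X,X')]\big)_{1\le d\le D}$. Then $\lim_{t\to\infty}\alpha^t=\alpha^{\max}$.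
   Context: $\mathcal{S}=\{\alpha\in\mathbb{R}^D:\alpha_d\ge0,\ \sum_d\alpha_d=1\}$; $\mathcal{E}_{\bar\pi}(\alpha)=\mathbb{E}_{\bar\pi}[\log\sum_{d=1}^D\alpha_dq_d(X,X')]$. Standing assumption of the paper's setting: $\mathcal{E}_{\bar\pi}$ is strictly concave on $\mathcal{S}$; $\alpha^{\max}$ denotes its unique global maximizer on $\mathcal{S}$ (equivalently, the weight vector minimizing the Kullback divergence between $\bar\pi$ and $\pi(dx)\sum_d\alpha_dQ_d(x,dx')$). *)

theory Defs
  imports "HOL-Analysis.Analysis" "HOL-Probability.Probability"
begin

text \<open>Weight vectors are indexed by a finite type 'd, so D = CARD('d).\<close>

definition weight_simplex :: "(real^'d::finite) set" where
  "weight_simplex = {a. (\<forall>d. 0 \<le> a $ d) \<and> (\<Sum>d\<in>UNIV. a $ d) = 1}"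

definition uniform_weights :: "real^'d::finite" where
  "uniform_weights = (\<chi> d. 1 / real CARD('d))"

definition strictly_concave_on :: "'v::real_vector set \<Rightarrow> ('v \<Rightarrow> real) \<Rightarrow> bool" where
  "strictly_concave_on S f \<longleftrightarrow>
     (\<forall>x\<in>S. \<forall>y\<in>S. x \<noteq> y \<longrightarrow> (\<forall>u::real. 0 < u \<and> u < 1 \<longrightarrow>
        f ((1 - u) *\<^sub>R x + u *\<^sub>R y) > (1 - u) * f x + u * f y))"

definition pibar :: "'a measure \<Rightarrow> ('a \<Rightarrow> real) \<Rightarrow> ('a \<times> 'a) measure" where
  "pibar M p = density (M \<Otimes>\<^sub>M M) (\<lambda>z. ennreal (p (fst z) * p (snd z)))"

definition mixture :: "('d::finite \<Rightarrow> 'a \<Rightarrow> 'a \<Rightarrow> real) \<Rightarrow> real^'d \<Rightarrow> 'a \<times> 'a \<Rightarrow> real" where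
  "mixture q a z = (\<Sum>j\<in>UNIV. a $ j * q j (fst z) (snd z))"

definition Ecrit :: "'a measure \<Rightarrow> ('a \<Rightarrow> real) \<Rightarrow> ('d::finite \<Rightarrow> 'a \<Rightarrow> 'a \<Rightarrow> real) \<Rightarrow> real^'d \<Rightarrow> real" where
  "Ecrit M p q a = (\<integral>z. ln (mixture q a z) \<partial>pibar M p)"

definition Fmap :: "'a measure \<Rightarrow> ('a \<Rightarrow> real) \<Rightarrow> ('d::finite \<Rightarrow> 'a \<Rightarrow> 'a \<Rightarrow> real) \<Rightarrow> real^'d \<Rightarrow> real^'d" where
  "Fmap M p q a = (\<chi> d. \<integral>z. a $ d * q d (fst z) (snd z) / mixture q a z \<partial>pibar M p)"

end

theory Submission
  imports Defs
begin

text \<open>Write E for the criterion and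
  c_d(a) = E[q_d / \<Sum>_j a_j q_j], so that F(a)_d = a_d c_d(a). Averaging ln x \<le> x - 1 with the
  posterior weights b_d q_d / \<Sum>_j b_j q_j gives, for a in the simplex with positive entries and any b
  in the simplex, E(b) - E(a) \<le> \<Sum>_d F(b)_d ln c_d(a). With b = amax and w = F(amax), the
  nonnegative quantity K_t = -\<Sum>_d w_d ln a^t_d therefore drops by at least E(amax) - E(a^t) \<ge> 0 in
  each step, whence E(a^t) \<rightarrow> E(amax). Continuity of E on the compact simplex and uniqueness of its
  maximizer (by strict concavity) then force a^t \<rightarrow> amax.\<close>

lemma weight_simplex_large_coord:
  assumes "(a::real^'d::finite) \<in> weight_simplex"
  obtains k where "1 / real CARD('d) \<le> a $ k"
proof -
  have "\<exists>k. 1 / real CARD('d) \<le> a $ k"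
  proof (rule ccontr)
    assume "\<nexists>k. 1 / real CARD('d) \<le> a $ k"
    then have "(\<Sum>k\<in>UNIV. a $ k) < (\<Sum>k\<in>(UNIV::'d set). 1 / real CARD('d))"
      by (intro sum_strict_mono) (auto simp: not_le)
    then show False using assms by (simp add: weight_simplex_def)
  qed
  with that show thesis by blast
qed

lemma weight_simplex_coord_le_one:
  assumes "(a::real^'d::finite) \<in> weight_simplex"
  shows "a $ k \<le> 1"
proof -
  have "a $ k \<le> (\<Sum>j\<in>UNIV. a $ j)"
    using assms by (intro member_le_sum) (auto simp: weight_simplex_def)
  then show ?thesis using assms by (simp add: weight_simplex_def)
qed

lemma convex_weight_simplex: "convex (weight_simplex :: (real^'d::finite) set)"
  unfolding convex_def weight_simplex_def
  by (simp add: sum.distrib sum_distrib_left[symmetric])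

lemma compact_weight_simplex: "compact (weight_simplex :: (real^'d::finite) set)"
  unfolding compact_eq_bounded_closed
proof
  show "bounded (weight_simplex :: (real^'d) set)"
    unfolding bounded_iff
  proof (intro exI ballI)
    fix x :: "real^'d" assume x: "x \<in> weight_simplex"
    have "norm x \<le> (\<Sum>i\<in>UNIV. \<bar>x $ i\<bar>)" by (rule norm_le_l1_cart)
    also have "\<dots> = 1" using x by (simp add: weight_simplex_def)
    finally show "norm x \<le> 1" .
  qed
  show "closed (weight_simplex :: (real^'d) set)"
    unfolding weight_simplex_def
    by (intro closed_Collect_conj closed_Collect_all closed_Collect_le closed_Collect_eq
        continuous_intros)
qed

lemma uniform_weights_in_simplex: "(uniform_weights :: real^'d::finite) \<in> weight_simplex"
  by (simp add: uniform_weights_def weight_simplex_def)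

lemma mixture_term_le:
  fixes q :: "'d::finite \<Rightarrow> 'a \<Rightarrow> 'a \<Rightarrow> real"
  assumes "a \<in> weight_simplex" "\<forall>d. 0 \<le> q d (fst z) (snd z)"
  shows "a $ d * q d (fst z) (snd z) \<le> mixture q a z"
  unfolding mixture_def using assms
  by (intro member_le_sum) (auto simp: weight_simplex_def)

lemma mixture_pos:
  fixes q :: "'d::finite \<Rightarrow> 'a \<Rightarrow> 'a \<Rightarrow> real"
  assumes "a \<in> weight_simplex" "\<forall>d. 0 < q d (fst z) (snd z)"
  shows "0 < mixture q a z"
proof -
  obtain k where k: "1 / real CARD('d) \<le> a $ k"
    using weight_simplex_large_coord[OF assms(1)] .
  have "0 < a $ k" using k by (rule less_le_trans[rotated]) simp
  then have "0 < a $ k * q k (fst z) (snd z)" using assms(2) by simp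
  also have "\<dots> \<le> mixture q a z"
    using assms by (intro mixture_term_le) (auto simp: less_imp_le)
  finally show ?thesis .
qed

text \<open>A mixture lies between \<open>q\<^sub>k/D\<close> for some \<open>k\<close> and \<open>max\<^sub>d q\<^sub>d\<close>.\<close>
lemma abs_ln_mixture_le:
  fixes q :: "'d::finite \<Rightarrow> 'a \<Rightarrow> 'a \<Rightarrow> real"
  assumes a: "a \<in> weight_simplex" and z: "\<forall>d. 0 < q d (fst z) (snd z)"
  shows "\<bar>ln (mixture q a z)\<bar>
    \<le> ln (real CARD('d)) + (\<Sum>d\<in>UNIV. \<bar>ln (q d (fst z) (snd z))\<bar>)"
proof -
  let ?Q = "\<lambda>d. q d (fst z) (snd z)"
  have pos: "0 < mixture q a z" using a z by (rule mixture_pos)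
  have abs_le_sum: "\<bar>ln (?Q k)\<bar> \<le> (\<Sum>d\<in>UNIV. \<bar>ln (?Q d)\<bar>)" for k
    by (intro member_le_sum) auto
  obtain k where k: "1 / real CARD('d) \<le> a $ k"
    using weight_simplex_large_coord[OF a] .
  have "?Q k / real CARD('d) \<le> a $ k * ?Q k"
    using mult_right_mono[OF k, of "?Q k"] z by (simp add: less_imp_le)
  also have "\<dots> \<le> mixture q a z"
    using a z by (intro mixture_term_le) (auto simp: less_imp_le)
  finally have "ln (?Q k / real CARD('d)) \<le> ln (mixture q a z)"
    using pos z by simp
  then have lower: "ln (?Q k) - ln (real CARD('d)) \<le> ln (mixture q a z)"
    using z[rule_format, of k] by (simp add: ln_div)
  have "Max (range ?Q) \<in> range ?Q" by (rule Max_in) auto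
  then obtain m where m_max: "Max (range ?Q) = ?Q m" by (rule rangeE)
  have m: "\<forall>d. ?Q d \<le> ?Q m" unfolding m_max[symmetric] by (auto intro: Max_ge)
  have "mixture q a z \<le> (\<Sum>d\<in>UNIV. a $ d * ?Q m)" unfolding mixture_def
    using a m by (intro sum_mono mult_left_mono) (auto simp: weight_simplex_def)
  also have "\<dots> = ?Q m"
    using a by (simp add: sum_distrib_right[symmetric] weight_simplex_def)
  finally have upper: "ln (mixture q a z) \<le> ln (?Q m)"
    using pos z by simp
  have "0 \<le> ln (real CARD('d))" by simp
  then show ?thesis
    using lower upper abs_le_sum[of k] abs_le_sum[of m] by linarith
qed

text \<open>Pointwise form of the EM inequality: \<open>ln x \<le> x - 1\<close> applied to \<open>x = m\<^sub>b / (m\<^sub>a c\<^sub>d)\<close>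
  and averaged with the posterior weights \<open>b\<^sub>d q\<^sub>d / m\<^sub>b\<close>.\<close>
lemma ln_mixture_diff_le:
  fixes q :: "'d::finite \<Rightarrow> 'a \<Rightarrow> 'a \<Rightarrow> real"
  assumes a: "a \<in> weight_simplex" and b: "b \<in> weight_simplex" and c: "\<forall>d. 0 < c d"
    and z: "\<forall>d. 0 < q d (fst z) (snd z)"
  shows "ln (mixture q b z) - ln (mixture q a z) \<le>
     (\<Sum>d\<in>UNIV. b $ d * q d (fst z) (snd z) / mixture q b z * ln (c d))
     + (\<Sum>d\<in>UNIV. b $ d / c d * (q d (fst z) (snd z) / mixture q a z)) - 1"
proof -
  define ma where "ma = mixture q a z"
  define mb where "mb = mixture q b z"
  define Q where "Q d = q d (fst z) (snd z)" for d
  define w where "w d = b $ d * Q d / mb" for d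
  have ma: "0 < ma" unfolding ma_def using a z by (rule mixture_pos)
  have mb: "0 < mb" unfolding mb_def using b z by (rule mixture_pos)
  have w_nonneg: "0 \<le> w d" for d
    unfolding w_def Q_def using b z mb by (simp add: weight_simplex_def less_imp_le)
  have w_sum: "(\<Sum>d\<in>UNIV. w d) = 1"
    unfolding w_def using mb by (simp add: sum_divide_distrib[symmetric] mb_def Q_def mixture_def)
  have each: "w d * (ln mb - ln ma) \<le> w d * ln (c d) + b $ d / c d * (Q d / ma) - w d" for d
  proof -
    have "ln mb - ln ma - ln (c d) = ln (mb / (ma * c d))"
      using ma mb c[rule_format, of d] by (simp add: ln_div ln_mult)
    also have "\<dots> \<le> mb / (ma * c d) - 1"
      using ma mb c by (intro ln_le_minus_one) simp
    finally have "w d * (ln mb - ln ma - ln (c d)) \<le> w d * (mb / (ma * c d) - 1)"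
      by (rule mult_left_mono[OF _ w_nonneg])
    moreover have "w d * (mb / (ma * c d)) = b $ d / c d * (Q d / ma)"
      unfolding w_def using mb ma c by (simp add: field_simps)
    ultimately show ?thesis by (simp only: right_diff_distrib mult_1_right)
  qed
  have "ln mb - ln ma = (\<Sum>d\<in>UNIV. w d * (ln mb - ln ma))"
    using w_sum by (simp add: sum_distrib_right[symmetric])
  also have "\<dots> \<le> (\<Sum>d\<in>UNIV. w d * ln (c d) + b $ d / c d * (Q d / ma) - w d)"
    by (rule sum_mono) (rule each)
  also have "\<dots> = (\<Sum>d\<in>UNIV. w d * ln (c d)) + (\<Sum>d\<in>UNIV. b $ d / c d * (Q d / ma)) - 1"
    using w_sum by (simp add: sum.distrib sum_subtractf)
  finally show ?thesis unfolding w_def Q_def ma_def mb_def .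
qed

lemma strictly_concave_on_maximizer_unique:
  assumes "convex S" "strictly_concave_on S f"
    and "m \<in> S" "\<forall>y\<in>S. f y \<le> f m" "x \<in> S" "x \<noteq> m"
  shows "f x < f m"
proof -
  let ?mid = "(1 - 1/2) *\<^sub>R x + (1/2::real) *\<^sub>R m"
  have "(1 - 1/2) * f x + (1/2) * f m < f ?mid"
    using assms(2)[unfolded strictly_concave_on_def, rule_format, OF assms(5,3,6), of "1/2"]
    by simp
  moreover have "?mid \<in> S" using assms(1,5,3) by (rule convexD) auto
  then have "f ?mid \<le> f m" using assms(4) by blast
  ultimately show ?thesis by simp
qed

lemma LIMSEQ_unique_maximizer:
  fixes f :: "'a::metric_space \<Rightarrow> real"
  assumes "compact S" "continuous_on S f" "m \<in> S" "\<forall>y\<in>S. y \<noteq> m \<longrightarrow> f y < f m"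
    and x: "\<forall>t. x t \<in> S" and lim: "(\<lambda>t. f (x t)) \<longlonglongrightarrow> f m"
  shows "x \<longlonglongrightarrow> m"
  unfolding tendsto_iff
proof (intro allI impI)
  fix e :: real assume "0 < e"
  define T where "T = S \<inter> {y. e \<le> dist y m}"
  have far: "x t \<in> T" if "\<not> dist (x t) m < e" for t
    using that x unfolding T_def by auto
  show "\<forall>\<^sub>F t in sequentially. dist (x t) m < e"
  proof (cases "T = {}")
    case True
    then show ?thesis using far by (auto intro: always_eventually)
  next
    case False
    have "compact T" unfolding T_def
      by (intro compact_Int_closed assms(1) closed_Collect_le continuous_intros)
    moreover have "continuous_on T f"
      by (rule continuous_on_subset[OF assms(2)]) (auto simp: T_def)
    ultimately obtain y where y: "y \<in> T" "\<forall>y'\<in>T. f y' \<le> f y"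
      using continuous_attains_sup[OF _ False] by blast
    have "f y < f m" using y(1) \<open>0 < e\<close> assms(4) unfolding T_def by auto
    then have "\<forall>\<^sub>F t in sequentially. dist (f (x t)) (f m) < f m - f y"
      using lim unfolding tendsto_iff by simp
    then show ?thesis
      by (rule eventually_mono) (use far y(2) in \<open>force simp: dist_real_def\<close>)
  qed
qed

lemma LIMSEQ_zero_of_le_decrease:
  fixes g K :: "nat \<Rightarrow> real"
  assumes "\<forall>t. 0 \<le> g t" "\<forall>t. g t \<le> K t - K (Suc t)" "\<forall>t. c \<le> K t"
  shows "g \<longlonglongrightarrow> 0"
proof -
  have "decseq K" unfolding decseq_Suc_iff using assms(1,2) by (metis diff_ge_0_iff_ge order_trans)
  then obtain L where L: "K \<longlonglongrightarrow> L" using decseq_convergent assms(3) by blast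
  have "(\<lambda>t. K t - K (Suc t)) \<longlonglongrightarrow> L - L"
    by (intro tendsto_diff L LIMSEQ_Suc[OF L])
  then show ?thesis
    by (intro tendsto_sandwich[of "\<lambda>_. 0" g _ "\<lambda>t. K t - K (Suc t)"]) (use assms in auto)
qed

lemma sets_pibar[simp, measurable_cong]: "sets (pibar M p) = sets (M \<Otimes>\<^sub>M M)"
  by (simp add: pibar_def)

lemma space_pibar[simp]: "space (pibar M p) = space (M \<Otimes>\<^sub>M M)"
  by (simp add: pibar_def)

lemma prob_space_pibar:
  assumes "sigma_finite_measure M" and [measurable]: "p \<in> borel_measurable M"
    and "\<forall>x\<in>space M. 0 \<le> p x" "(\<integral>\<^sup>+ x. ennreal (p x) \<partial>M) = 1"
  shows "prob_space (pibar M p)"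
proof
  interpret M: sigma_finite_measure M by (rule assms(1))
  have "emeasure (pibar M p) (space (pibar M p))
      = (\<integral>\<^sup>+ z. ennreal (p (fst z) * p (snd z)) * indicator (space (M \<Otimes>\<^sub>M M)) z \<partial>(M \<Otimes>\<^sub>M M))"
    unfolding pibar_def by (subst emeasure_density) auto
  also have "\<dots> = (\<integral>\<^sup>+ z. ennreal (p (fst z)) * ennreal (p (snd z)) \<partial>(M \<Otimes>\<^sub>M M))"
    using assms(3) by (intro nn_integral_cong) (auto simp: space_pair_measure ennreal_mult)
  also have "\<dots> = (\<integral>\<^sup>+ x. \<integral>\<^sup>+ y. ennreal (p x) * ennreal (p y) \<partial>M \<partial>M)"
    by (subst M.nn_integral_fst[symmetric]) auto
  also have "\<dots> = 1" by (simp add: nn_integral_cmult assms(4))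
  finally show "emeasure (pibar M p) (space (pibar M p)) = 1" .
qed

lemma AE_all_pos_of_null_zero_sets:
  fixes f :: "'d::finite \<Rightarrow> 'b \<Rightarrow> real"
  assumes "\<And>d. f d \<in> borel_measurable N" "\<And>d z. z \<in> space N \<Longrightarrow> 0 \<le> f d z"
    and "\<And>d. emeasure N {z \<in> space N. f d z = 0} = 0"
  shows "AE z in N. \<forall>d. 0 < f d z"
proof -
  have nonzero: "AE z in N. f d z \<noteq> 0" for d
  proof (rule AE_I')
    have "{z \<in> space N. f d z = 0} \<in> sets N" using assms(1) by measurable
    then show "{z \<in> space N. f d z = 0} \<in> null_sets N" using assms(3) by (simp add: null_sets_def)
  qed auto
  have "AE z in N. 0 < f d z" for d
    using nonzero[of d] AE_space
    by (rule eventually_elim2) (simp add: assms(2) order.not_eq_order_implies_strict)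
  then show ?thesis by (simp add: AE_finite_all[of UNIV, simplified])
qed

locale em_setting = prob_space P
  for P :: "('a \<times> 'a) measure" +
  fixes q :: "'d::finite \<Rightarrow> 'a \<Rightarrow> 'a \<Rightarrow> real"
  assumes q_measurable[measurable]: "(\<lambda>z. q d (fst z) (snd z)) \<in> borel_measurable P"
    and q_pos_AE: "AE z in P. \<forall>d. 0 < q d (fst z) (snd z)"
    and integrable_abs_ln_q: "integrable P (\<lambda>z. \<bar>ln (q d (fst z) (snd z))\<bar>)"
begin

definition log_likelihood :: "real^'d \<Rightarrow> real" where
  "log_likelihood a = (\<integral>z. ln (mixture q a z) \<partial>P)"

definition em_factor :: "real^'d \<Rightarrow> 'd \<Rightarrow> real" where
  "em_factor a d = (\<integral>z. q d (fst z) (snd z) / mixture q a z \<partial>P)"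

definition em_step :: "real^'d \<Rightarrow> real^'d" where
  "em_step a = (\<chi> d. \<integral>z. a $ d * q d (fst z) (snd z) / mixture q a z \<partial>P)"

lemma mixture_measurable[measurable]: "(\<lambda>z. mixture q a z) \<in> borel_measurable P"
  unfolding mixture_def by measurable

lemma integrable_ln_mixture_bound:
  "integrable P (\<lambda>z. ln (real CARD('d)) + (\<Sum>d\<in>UNIV. \<bar>ln (q d (fst z) (snd z))\<bar>))"
  using integrable_abs_ln_q by auto

lemma integrable_ln_mixture:
  assumes "a \<in> weight_simplex"
  shows "integrable P (\<lambda>z. ln (mixture q a z))"
proof (rule Bochner_Integration.integrable_bound[OF integrable_ln_mixture_bound])
  show "AE z in P. norm (ln (mixture q a z))
      \<le> norm (ln (real CARD('d)) + (\<Sum>d\<in>UNIV. \<bar>ln (q d (fst z) (snd z))\<bar>))"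
    using q_pos_AE by eventually_elim (use abs_ln_mixture_le[OF assms] in auto)
qed measurable

lemma integrable_likelihood_ratio:
  assumes "a \<in> weight_simplex" "0 < a $ d"
  shows "integrable P (\<lambda>z. q d (fst z) (snd z) / mixture q a z)"
proof (rule integrable_const_bound[where B = "1 / a $ d"])
  show "AE z in P. norm (q d (fst z) (snd z) / mixture q a z) \<le> 1 / a $ d"
    using q_pos_AE
  proof eventually_elim
    case (elim z)
    have "0 < mixture q a z" using assms(1) elim by (rule mixture_pos)
    moreover have "a $ d * q d (fst z) (snd z) \<le> mixture q a z"
      using assms(1) elim by (intro mixture_term_le) (auto simp: less_imp_le)
    moreover have "0 < q d (fst z) (snd z)" using elim by simp
    ultimately show ?case
      using assms(2) by (simp add: divide_simps mult.commute)
  qed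
qed measurable

lemma posterior_weight_bounds:
  assumes "a \<in> weight_simplex" "\<forall>d. 0 < q d (fst z) (snd z)"
  shows "0 \<le> a $ d * q d (fst z) (snd z) / mixture q a z"
    and "a $ d * q d (fst z) (snd z) / mixture q a z \<le> 1"
proof -
  have "0 < mixture q a z" using assms by (rule mixture_pos)
  moreover have "a $ d * q d (fst z) (snd z) \<le> mixture q a z"
    using assms by (intro mixture_term_le) (auto simp: less_imp_le)
  moreover have "0 \<le> a $ d" using assms(1) by (simp add: weight_simplex_def)
  ultimately show "0 \<le> a $ d * q d (fst z) (snd z) / mixture q a z"
    and "a $ d * q d (fst z) (snd z) / mixture q a z \<le> 1"
    using assms(2) by (simp_all add: less_imp_le)
qed

lemma posterior_weights_sum:
  assumes "a \<in> weight_simplex" "\<forall>d. 0 < q d (fst z) (snd z)"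
  shows "(\<Sum>d\<in>UNIV. a $ d * q d (fst z) (snd z) / mixture q a z) = 1"
  using mixture_pos[of a q z] assms
  by (simp add: sum_divide_distrib[symmetric] mixture_def)

lemma integrable_posterior_weight:
  assumes "a \<in> weight_simplex"
  shows "integrable P (\<lambda>z. a $ d * q d (fst z) (snd z) / mixture q a z)"
proof (rule integrable_const_bound[where B = 1])
  show "AE z in P. norm (a $ d * q d (fst z) (snd z) / mixture q a z) \<le> 1"
    using q_pos_AE
  proof (rule eventually_mono)
    fix z assume "\<forall>d. 0 < q d (fst z) (snd z)"
    with posterior_weight_bounds[OF assms this]
    show "norm (a $ d * q d (fst z) (snd z) / mixture q a z) \<le> 1"
      by (simp only: real_norm_def abs_le_iff) (metis order_trans neg_le_0_iff_le zero_le_one)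
  qed
qed measurable

lemma em_step_eq: "em_step a $ d = a $ d * em_factor a d"
  unfolding em_step_def em_factor_def
  using integral_mult_right_zero[of P "a $ d" "\<lambda>z. q d (fst z) (snd z) / mixture q a z"] by simp

lemma em_factor_pos:
  assumes "a \<in> weight_simplex" "0 < a $ d"
  shows "0 < em_factor a d"
proof -
  have int: "integrable P (\<lambda>z. q d (fst z) (snd z) / mixture q a z)"
    using assms by (rule integrable_likelihood_ratio)
  have pos: "AE z in P. 0 < q d (fst z) (snd z) / mixture q a z"
    using q_pos_AE by (rule eventually_mono) (simp add: mixture_pos[OF assms(1)])
  then have nonneg: "AE z in P. 0 \<le> q d (fst z) (snd z) / mixture q a z"
    by eventually_elim simp
  have "em_factor a d \<noteq> 0"
  proof
    assume "em_factor a d = 0"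
    then have "AE z in P. q d (fst z) (snd z) / mixture q a z = 0"
      using integral_nonneg_eq_0_iff_AE[OF int nonneg] by (simp add: em_factor_def)
    with pos have "AE z in P. False" by eventually_elim simp
    then show False by simp
  qed
  moreover have "0 \<le> em_factor a d"
    unfolding em_factor_def by (rule integral_nonneg_AE[OF nonneg])
  ultimately show ?thesis by simp
qed

lemma em_step_coord_pos:
  assumes "a \<in> weight_simplex" "0 < a $ d"
  shows "0 < em_step a $ d"
  using assms em_factor_pos[OF assms] by (simp add: em_step_eq)

lemma em_step_in_simplex:
  assumes "a \<in> weight_simplex"
  shows "em_step a \<in> weight_simplex"
proof -
  have "AE z in P. 0 \<le> a $ d * q d (fst z) (snd z) / mixture q a z" for d
    using q_pos_AE by (rule eventually_mono) (rule posterior_weight_bounds(1)[OF assms])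
  then have nonneg: "0 \<le> em_step a $ d" for d
    unfolding em_step_def by (simp add: integral_nonneg_AE)
  have "(\<Sum>d\<in>UNIV. em_step a $ d)
      = (\<integral>z. (\<Sum>d\<in>UNIV. a $ d * q d (fst z) (snd z) / mixture q a z) \<partial>P)"
    unfolding em_step_def
    by (simp add: Bochner_Integration.integral_sum integrable_posterior_weight[OF assms])
  also have "\<dots> = (\<integral>z. 1 \<partial>P)"
    using q_pos_AE
    by (intro integral_cong_AE) (auto elim!: eventually_mono intro: posterior_weights_sum[OF assms])
  also have "\<dots> = 1" by (simp add: prob_space)
  finally show ?thesis using nonneg by (simp add: weight_simplex_def)
qed

lemma log_likelihood_gain_le:
  assumes a: "a \<in> weight_simplex" "\<forall>d. 0 < a $ d" and b: "b \<in> weight_simplex"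
  shows "log_likelihood b - log_likelihood a \<le> (\<Sum>d\<in>UNIV. em_step b $ d * ln (em_factor a d))"
proof -
  let ?c = "em_factor a"
  have c: "\<forall>d. 0 < ?c d" using em_factor_pos a by blast
  define A where "A z = (\<Sum>d\<in>UNIV. b $ d * q d (fst z) (snd z) / mixture q b z * ln (?c d))" for z
  define C where "C z = (\<Sum>d\<in>UNIV. b $ d / ?c d * (q d (fst z) (snd z) / mixture q a z))" for z
  have int_A: "integrable P A" unfolding A_def
    by (intro Bochner_Integration.integrable_sum integrable_mult_left integrable_posterior_weight b)
  have int_C: "integrable P C" unfolding C_def
    by (intro Bochner_Integration.integrable_sum integrable_mult_right integrable_likelihood_ratio a(1))
      (simp add: a(2))
  have integral_A: "integral\<^sup>L P A = (\<Sum>d\<in>UNIV. em_step b $ d * ln (?c d))"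
  proof -
    have "integral\<^sup>L P A
        = (\<Sum>d\<in>UNIV. \<integral>z. b $ d * q d (fst z) (snd z) / mixture q b z * ln (?c d) \<partial>P)"
      unfolding A_def
      by (intro Bochner_Integration.integral_sum integrable_mult_left integrable_posterior_weight b)
    then show ?thesis
      unfolding em_step_def by (simp only: integral_mult_left_zero vec_lambda_beta)
  qed
  have integral_C: "integral\<^sup>L P C = 1"
  proof -
    have "integral\<^sup>L P C
        = (\<Sum>d\<in>UNIV. \<integral>z. b $ d / ?c d * (q d (fst z) (snd z) / mixture q a z) \<partial>P)"
      unfolding C_def
      by (intro Bochner_Integration.integral_sum integrable_mult_right integrable_likelihood_ratio
          a(1)) (simp add: a(2))
    also have "\<dots> = (\<Sum>d\<in>UNIV. b $ d / ?c d * ?c d)"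
      unfolding em_factor_def by (simp only: integral_mult_right_zero)
    also have "\<dots> = (\<Sum>d\<in>UNIV. b $ d)"
      by (rule sum.cong[OF refl]) (metis c less_irrefl nonzero_eq_divide_eq)
    also have "\<dots> = 1" using b by (simp add: weight_simplex_def)
    finally show ?thesis .
  qed
  have "log_likelihood b - log_likelihood a
      = (\<integral>z. ln (mixture q b z) - ln (mixture q a z) \<partial>P)"
    unfolding log_likelihood_def using a b by (simp add: integrable_ln_mixture)
  also have "\<dots> \<le> (\<integral>z. A z + C z - 1 \<partial>P)"
  proof (rule integral_mono_AE)
    show "integrable P (\<lambda>z. ln (mixture q b z) - ln (mixture q a z))"
      using a b by (simp add: integrable_ln_mixture)
    show "integrable P (\<lambda>z. A z + C z - 1)" using int_A int_C by simp
    show "AE z in P. ln (mixture q b z) - ln (mixture q a z) \<le> A z + C z - 1"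
      using q_pos_AE
      by (rule eventually_mono) (unfold A_def C_def, rule ln_mixture_diff_le[OF a(1) b c])
  qed
  also have "\<dots> = integral\<^sup>L P A + integral\<^sup>L P C - 1"
    using int_A int_C by (simp add: prob_space)
  also have "\<dots> = (\<Sum>d\<in>UNIV. em_step b $ d * ln (em_factor a d))"
    by (simp add: integral_A integral_C)
  finally show ?thesis .
qed

lemma continuous_on_log_likelihood: "continuous_on weight_simplex log_likelihood"
proof (rule continuous_on_sequentiallyI)
  fix u :: "nat \<Rightarrow> real^'d" and a :: "real^'d"
  assume u: "\<forall>n. u n \<in> weight_simplex" and a: "a \<in> weight_simplex" and lim: "u \<longlonglongrightarrow> a"
  show "(\<lambda>n. log_likelihood (u n)) \<longlonglongrightarrow> log_likelihood a"
    unfolding log_likelihood_def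
  proof (rule integral_dominated_convergence[OF _ _ integrable_ln_mixture_bound])
    show "AE z in P. (\<lambda>n. ln (mixture q (u n) z)) \<longlonglongrightarrow> ln (mixture q a z)"
      using q_pos_AE
    proof (rule eventually_mono)
      fix z assume z: "\<forall>d. 0 < q d (fst z) (snd z)"
      have "(\<lambda>n. mixture q (u n) z) \<longlonglongrightarrow> mixture q a z"
        unfolding mixture_def by (intro tendsto_intros lim)
      then show "(\<lambda>n. ln (mixture q (u n) z)) \<longlonglongrightarrow> ln (mixture q a z)"
        by (rule tendsto_ln) (use mixture_pos[of a q z] a z in simp)
    qed
    show "AE z in P. norm (ln (mixture q (u n) z))
        \<le> ln (real CARD('d)) + (\<Sum>d\<in>UNIV. \<bar>ln (q d (fst z) (snd z))\<bar>)" for n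
      using q_pos_AE by (rule eventually_mono) (simp add: abs_ln_mixture_le u)
  qed measurable
qed

lemma em_iterates_tendsto_maximizer:
  assumes concave: "strictly_concave_on weight_simplex log_likelihood"
    and amax: "amax \<in> weight_simplex" "\<forall>a\<in>weight_simplex. log_likelihood a \<le> log_likelihood amax"
  shows "(\<lambda>t. (em_step ^^ t) uniform_weights) \<longlonglongrightarrow> amax"
proof -
  define x where "x t = (em_step ^^ t) uniform_weights" for t
  have x_Suc: "x (Suc t) = em_step (x t)" for t unfolding x_def by simp
  have x_simplex: "x t \<in> weight_simplex" for t
    by (induction t) (simp_all add: x_def uniform_weights_in_simplex em_step_in_simplex)
  have x_pos: "\<forall>d. 0 < x t $ d" for t
    by (induction t) (simp_all add: x_Suc em_step_coord_pos x_simplex, simp add: x_def uniform_weights_def)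
  define w where "w = em_step amax"
  define K where "K t = - (\<Sum>d\<in>UNIV. w $ d * ln (x t $ d))" for t
  have K_nonneg: "0 \<le> K t" for t
  proof -
    have "w $ d * ln (x t $ d) \<le> 0" for d
      using x_pos[of t] weight_simplex_coord_le_one[OF x_simplex, of t d]
        em_step_in_simplex[OF amax(1)]
      by (intro mult_nonneg_nonpos) (auto simp: w_def weight_simplex_def)
    then show ?thesis unfolding K_def by (simp add: sum_nonpos)
  qed
  have decrease: "log_likelihood amax - log_likelihood (x t) \<le> K t - K (Suc t)" for t
  proof -
    have "ln (em_factor (x t) d) = ln (x (Suc t) $ d) - ln (x t $ d)" for d
      using x_pos[of t, rule_format, of d] em_factor_pos[OF x_simplex, of t d]
      by (simp add: x_Suc em_step_eq ln_mult)
    then have "K t - K (Suc t) = (\<Sum>d\<in>UNIV. w $ d * ln (em_factor (x t) d))"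
      by (simp add: K_def right_diff_distrib sum_subtractf)
    then show ?thesis
      unfolding w_def using log_likelihood_gain_le[OF x_simplex x_pos amax(1)] by simp
  qed
  have "(\<lambda>t. log_likelihood amax - log_likelihood (x t)) \<longlonglongrightarrow> 0"
    using amax x_simplex decrease K_nonneg
    by (intro LIMSEQ_zero_of_le_decrease[where K = K and c = 0]) auto
  from tendsto_diff[OF tendsto_const[of "log_likelihood amax"] this]
  have lim: "(\<lambda>t. log_likelihood (x t)) \<longlonglongrightarrow> log_likelihood amax" by simp
  have unique: "\<forall>y\<in>weight_simplex. y \<noteq> amax \<longrightarrow> log_likelihood y < log_likelihood amax"
    using strictly_concave_on_maximizer_unique[OF convex_weight_simplex concave amax] by blast
  show ?thesis
    unfolding x_def[symmetric]
    by (rule LIMSEQ_unique_maximizer[OF compact_weight_simplex continuous_on_log_likelihood amax(1)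
          unique _ lim]) (simp add: x_simplex)
qed

end


theorem proposition4p3:
  fixes M :: "'a measure" and p :: "'a \<Rightarrow> real"
    and q :: "'d::finite \<Rightarrow> 'a \<Rightarrow> 'a \<Rightarrow> real"
    and amax :: "real^'d"
  assumes sigma_finite: "sigma_finite_measure M"
    and p_meas: "p \<in> borel_measurable M"
    and p_nonneg: "\<forall>x\<in>space M. 0 \<le> p x"
    and p_dens: "(\<integral>\<^sup>+ x. ennreal (p x) \<partial>M) = 1"
    and q_meas: "\<forall>d. (\<lambda>z. q d (fst z) (snd z)) \<in> borel_measurable (M \<Otimes>\<^sub>M M)"
    and q_nonneg: "\<forall>d. \<forall>x\<in>space M. \<forall>y\<in>space M. 0 \<le> q d x y"
    and q_dens: "\<forall>d. \<forall>x\<in>space M. (\<integral>\<^sup>+ y. ennreal (q d x y) \<partial>M) = 1"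
    and A1: "\<forall>d. emeasure (pibar M p) {z \<in> space (M \<Otimes>\<^sub>M M). q d (fst z) (snd z) = 0} = 0"
    and A2: "\<forall>d. integrable (pibar M p) (\<lambda>z. \<bar>ln (q d (fst z) (snd z))\<bar>)"
    and strict_conc: "strictly_concave_on weight_simplex (Ecrit M p q)"
    and amax_in: "amax \<in> weight_simplex"
    and amax_max: "\<forall>a\<in>weight_simplex. Ecrit M p q a \<le> Ecrit M p q amax"
  shows "(\<lambda>t. (Fmap M p q ^^ t) uniform_weights) \<longlonglongrightarrow> amax"
proof -
  have q_measurable_pibar: "(\<lambda>z. q d (fst z) (snd z)) \<in> borel_measurable (pibar M p)" for d
    using q_meas by (simp add: measurable_cong_sets[OF sets_pibar refl])
  interpret em_setting "pibar M p" q
  proof (intro em_setting.intro em_setting_axioms.intro)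
    show "prob_space (pibar M p)"
      using sigma_finite p_meas p_nonneg p_dens by (rule prob_space_pibar)
    show "AE z in pibar M p. \<forall>d. 0 < q d (fst z) (snd z)"
      using q_measurable_pibar q_nonneg A1
      by (intro AE_all_pos_of_null_zero_sets[where f = "\<lambda>d z. q d (fst z) (snd z)"])
        (auto simp: space_pair_measure)
  qed (use q_measurable_pibar A2 in auto)
  have "Ecrit M p q = log_likelihood" "Fmap M p q = em_step"
    by (simp_all add: fun_eq_iff Ecrit_def Fmap_def log_likelihood_def em_step_def)
  then show ?thesis
    using em_iterates_tendsto_maximizer strict_conc amax_in amax_max by simp
qed

end
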